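(* Let $M=\mathbb{R}/\mathbb{Z}$ with its standard flat metric, so that $\mathrm{Vol}(\mathbb{R}/\mathbb{Z})=1$. Let $X_1,\dots,X_N$ be $M$-valued random variables, each with distribution $\mu$, and $\mu_N=N^{-1}\sum_{n=1}^N\delta_{X_n}$. Assume $\mu\ge c\,\mathrm{Vol}$ and $\sum_{1\le m<n\le N}\alpha(X_m,X_n)\le BN$ with constants $c>0$, $B\ge0$. Then \[\sqrt{\mathbb{E}W_2^2(\mu_N,\mu)}\le\sqrt{\frac{2+16B}{3cN}}.\]
   Context: $W_2$ is the quadratic Wasserstein metric with respect to the geodesic (circle) distance $\rho$: $W_2(\mu,\nu)=\inf_\pi\left(\int\rho(x,y)^2\,\mathrm{d}\pi(x,y)\right)^{1/2}$ over couplings $\pi$ of $\mu,\nu$. $\alpha(X,Y)=\sup_{A,B}|\Pr(X\in A,Y\in B)-\Pr(X\in A)\Pr(Y\in B)|$ over Borel sets $A,B$. $\mu\ge c\,\mathrm{Vol}$ means $\mu(A)\ge c\,\mathrm{Vol}(A)$ for all Borel $A$. *)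

theory Defs
  imports "HOL-Probability.Probability"
begin

text \<open>The circle M = R/Z is represented by the fundamental domain [0,1) of the reals.
  Geodesic (circle) distance on [0,1):\<close>
definition circ_dist :: "real \<Rightarrow> real \<Rightarrow> real" where
  "circ_dist x y = min \<bar>x - y\<bar> (1 - \<bar>x - y\<bar>)"

definition coupling :: "(real \<times> real) measure \<Rightarrow> real measure \<Rightarrow> real measure \<Rightarrow> bool" where
  "coupling \<pi> \<mu> \<nu> \<longleftrightarrow> prob_space \<pi> \<and> sets \<pi> = sets (borel \<Otimes>\<^sub>M borel)
     \<and> distr \<pi> borel fst = \<mu> \<and> distr \<pi> borel snd = \<nu>"

definition W2 :: "real measure \<Rightarrow> real measure \<Rightarrow> real" where
  "W2 \<mu> \<nu> = sqrt (Inf {(\<integral>z. (circ_dist (fst z) (snd z))\<^sup>2 \<partial>\<pi>) | \<pi>. coupling \<pi> \<mu> \<nu>})"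

text \<open>Empirical measure (1/N) \<Sum>_{n=1}^N \<delta>_{x n}, as a Borel measure.\<close>
definition empirical_measure :: "nat \<Rightarrow> (nat \<Rightarrow> real) \<Rightarrow> real measure" where
  "empirical_measure N x = distr (measure_pmf (pmf_of_set {1..N})) borel x"

definition alpha_mix :: "'a measure \<Rightarrow> ('a \<Rightarrow> real) \<Rightarrow> ('a \<Rightarrow> real) \<Rightarrow> real" where
  "alpha_mix M X Y = (SUP A\<in>sets borel. SUP B\<in>sets borel.
     \<bar>measure M {\<omega>\<in>space M. X \<omega> \<in> A \<and> Y \<omega> \<in> B}
       - measure M {\<omega>\<in>space M. X \<omega> \<in> A} * measure M {\<omega>\<in>space M. Y \<omega> \<in> B}\<bar>)"

end

theory Submission
  imports Defs
begin

text \<open>Couple a distribution P on [0,1] with \<mu> through their quantile functions on (0,1): as the circle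
  distance is at most the distance on the line, W_2^2(P,\<mu>) is at most the L^2 distance of the
  quantile functions. Writing (a - b)^2 as the integral of 2|x - b| over the segment between a and b
  and exchanging the order of integration, the lower bound \<mu> \<ge> c Vol, which makes the cdf F of \<mu>
  grow at rate at least c on [0,1], turns this into W_2^2(P,\<mu>) \<le> (2/c) \<integral>_0^1 (F_P - F)^2.
  For the empirical measure, N (F_{\<mu>_N}(x) - F(x)) is a sum of centred indicators whose variances are
  at most 1/4 and whose covariances are bounded by the mixing coefficients, so that
  E W_2^2(\<mu>_N,\<mu>) \<le> (2/c)(1/4 + 2B)/N = (1 + 8B)/(2cN), which is below the stated bound.\<close>

section \<open>The quantile coupling\<close>

definition quantile :: "real measure \<Rightarrow> real \<Rightarrow> real" where
  "quantile P t = (if t \<in> {0<..<1} then Inf {x. t \<le> cdf P x} else 0)"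

lemma le_cdf_iff_quantile_le:
  assumes "real_distribution P" "t \<in> {0<..<1}"
  shows "t \<le> cdf P x \<longleftrightarrow> quantile P t \<le> x"
proof -
  interpret cdf_distribution P by (simp add: assms(1) cdf_distribution.intro)
  show ?thesis using pseudoinverse[of t x] assms(2) by (simp add: quantile_def)
qed

lemma borel_measurable_quantile[measurable]:
  assumes "real_distribution P"
  shows "quantile P \<in> borel_measurable borel"
proof -
  interpret cdf_distribution P by (simp add: assms cdf_distribution.intro)
  have "(\<lambda>t. if t \<in> {0<..<1} then Inf {x. t \<le> cdf P x} else 0) \<in> borel_measurable borel"
    using measurable_CI by (subst (asm) measurable_restrict_space_iff) auto
  then show ?thesis unfolding quantile_def[abs_def] .
qed

lemma quantile_in_unit_interval:
  assumes P: "real_distribution P" and t: "t \<in> {0<..<1}"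
    and below: "\<And>x. x < 0 \<Longrightarrow> cdf P x = 0" and at_one: "cdf P 1 = 1"
  shows "quantile P t \<in> {0..1}"
proof -
  have "quantile P t \<le> 1"
    using le_cdf_iff_quantile_le[OF P t, of 1] at_one t by simp
  moreover have "t \<le> cdf P (quantile P t)"
    using le_cdf_iff_quantile_le[OF P t] by simp
  then have "0 \<le> quantile P t"
    using below t by (metis greaterThanLessThan_iff not_le order.strict_iff_not)
  ultimately show ?thesis by simp
qed

lemma distr_quantile_eq:
  assumes "real_distribution P"
  shows "distr (restrict_space lborel {0<..<1}) borel (quantile P) = P"
proof -
  interpret cdf_distribution P by (simp add: assms cdf_distribution.intro)
  have "distr (restrict_space lborel {0<..<1}) borel (quantile P)
      = distr (restrict_space lborel {0<..<1}) borel I"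
    by (rule distr_cong) (auto simp: space_restrict_space quantile_def)
  then show ?thesis using distr_I_eq_M by simp
qed

lemma circ_dist_sq_le: "(circ_dist x y)\<^sup>2 \<le> (x - y)\<^sup>2"
  unfolding circ_dist_def by (auto simp: min_def abs_le_square_iff[symmetric] abs_if)

lemma borel_measurable_circ_dist[measurable]:
  "(\<lambda>z. circ_dist (fst z) (snd z)) \<in> borel_measurable (borel \<Otimes>\<^sub>M borel)"
  unfolding circ_dist_def by measurable

text \<open>The cost is measured by the nonnegative integral because the Bochner integral in W2 is the
  junk value 0 for a non-integrable cost.\<close>
lemma W2_sq_le_coupling_cost:
  assumes "coupling \<pi> P Q"
  shows "ennreal ((W2 P Q)\<^sup>2) \<le> (\<integral>\<^sup>+z. ennreal ((circ_dist (fst z) (snd z))\<^sup>2) \<partial>\<pi>)"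
    (is "_ \<le> ?cost")
proof (cases "?cost = \<infinity>")
  case False
  define S where "S = {(\<integral>z. (circ_dist (fst z) (snd z))\<^sup>2 \<partial>\<pi>') | \<pi>'. coupling \<pi>' P Q}"
  have cost_in_S: "(\<integral>z. (circ_dist (fst z) (snd z))\<^sup>2 \<partial>\<pi>) \<in> S"
    using assms by (auto simp: S_def)
  have S_nonneg: "0 \<le> s" if "s \<in> S" for s
    using that by (auto simp: S_def)
  have "0 \<le> Inf S"
    using cost_in_S S_nonneg by (intro cInf_greatest) auto
  then have "(W2 P Q)\<^sup>2 = Inf S"
    by (simp add: W2_def S_def[symmetric])
  also have "\<dots> \<le> (\<integral>z. (circ_dist (fst z) (snd z))\<^sup>2 \<partial>\<pi>)"
    using cost_in_S S_nonneg by (intro cInf_lower bdd_belowI[of S 0]) auto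
  also have "\<dots> \<le> enn2real ?cost"
    using False by (intro integral_real_bounded) (auto simp: less_top)
  finally have "ennreal ((W2 P Q)\<^sup>2) \<le> ennreal (enn2real ?cost)"
    by (rule ennreal_leI)
  also have "ennreal (enn2real ?cost) = ?cost"
    using False by (simp add: less_top)
  finally show ?thesis .
qed simp

lemma W2_sq_le_quantile_distance:
  assumes P: "real_distribution P" and Q: "real_distribution Q"
  shows "ennreal ((W2 P Q)\<^sup>2)
    \<le> (\<integral>\<^sup>+t. ennreal ((quantile P t - quantile Q t)\<^sup>2) * indicator {0<..<1} t \<partial>lborel)"
proof -
  define U where "U = restrict_space lborel {0<..<1::real}"
  interpret U: prob_space U
    unfolding U_def by (auto simp: emeasure_restrict_space space_restrict_space intro!: prob_spaceI)
  have [measurable]: "quantile P \<in> borel_measurable U" "quantile Q \<in> borel_measurable U"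
    unfolding U_def using P Q by (auto intro: measurable_restrict_space1)
  define \<pi> where "\<pi> = distr U (borel \<Otimes>\<^sub>M borel) (\<lambda>t. (quantile P t, quantile Q t))"
  have "distr U borel (quantile P) = P" "distr U borel (quantile Q) = Q"
    unfolding U_def using distr_quantile_eq P Q by auto
  then have "coupling \<pi> P Q"
    unfolding coupling_def \<pi>_def by (auto simp: distr_distr comp_def intro!: U.prob_space_distr)
  then have "ennreal ((W2 P Q)\<^sup>2) \<le> (\<integral>\<^sup>+z. ennreal ((circ_dist (fst z) (snd z))\<^sup>2) \<partial>\<pi>)"
    by (rule W2_sq_le_coupling_cost)
  also have "\<dots> = (\<integral>\<^sup>+t. ennreal ((circ_dist (quantile P t) (quantile Q t))\<^sup>2) \<partial>U)"
    unfolding \<pi>_def by (simp add: nn_integral_distr)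
  also have "\<dots> \<le> (\<integral>\<^sup>+t. ennreal ((quantile P t - quantile Q t)\<^sup>2) \<partial>U)"
    by (intro nn_integral_mono ennreal_leI circ_dist_sq_le)
  also have "\<dots> = (\<integral>\<^sup>+t. ennreal ((quantile P t - quantile Q t)\<^sup>2) * indicator {0<..<1} t \<partial>lborel)"
    unfolding U_def by (simp add: nn_integral_restrict_space)
  finally show ?thesis .
qed

section \<open>From quantile functions to distribution functions\<close>

lemma abs_sub_quantile_le_level_gap:
  assumes Q: "real_distribution Q" and c: "c > 0"
    and growth: "\<And>x y. 0 \<le> x \<Longrightarrow> x \<le> y \<Longrightarrow> y \<le> 1 \<Longrightarrow> c * (y - x) \<le> cdf Q y - cdf Q x"
    and t: "t \<in> {0<..<1}" and x: "x \<in> {0..1}" and q: "quantile Q t \<in> {0..1}"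
  shows "c * \<bar>x - quantile Q t\<bar> \<le> \<bar>t - cdf Q x\<bar>"
proof (cases "x < quantile Q t")
  case True
  have "quantile Q t \<le> x + (t - cdf Q x) / c"
  proof (rule dense_le_bounded[OF True])
    fix y assume y: "x < y" "y < quantile Q t"
    then have "cdf Q y < t"
      using le_cdf_iff_quantile_le[OF Q t] by (meson not_le)
    moreover have "c * (y - x) \<le> cdf Q y - cdf Q x"
      using growth y x q by auto
    ultimately show "y \<le> x + (t - cdf Q x) / c"
      using c by (simp add: field_simps)
  qed
  then show ?thesis
    using True c by (simp add: field_simps)
next
  case False
  have "t \<le> cdf Q (quantile Q t)"
    using le_cdf_iff_quantile_le[OF Q t] by simp
  moreover have "c * (x - quantile Q t) \<le> cdf Q x - cdf Q (quantile Q t)"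
    using growth False x q by auto
  ultimately show ?thesis
    using False by simp
qed

lemma level_between_cdfs:
  assumes P: "real_distribution P" and Q: "real_distribution Q" and t: "t \<in> {0<..<1}"
    and x: "min (quantile P t) (quantile Q t) < x" "x < max (quantile P t) (quantile Q t)"
  shows "t \<in> {min (cdf P x) (cdf Q x)<..max (cdf P x) (cdf Q x)}"
  using x le_cdf_iff_quantile_le[OF P t, of x] le_cdf_iff_quantile_le[OF Q t, of x]
  by (auto simp: min_def max_def split: if_splits)

lemma nn_integral_abs_between:
  fixes a b :: real
  shows "(\<integral>\<^sup>+x. ennreal (2 * \<bar>x - b\<bar>) * indicator {min a b<..<max a b} x \<partial>lborel)
    = ennreal ((a - b)\<^sup>2)"
proof -
  have "(\<integral>\<^sup>+x. ennreal (2 * \<bar>x - b\<bar>) * indicator {min a b<..<max a b} x \<partial>lborel)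
      = (\<integral>\<^sup>+x. ennreal (2 * \<bar>x - b\<bar>) * indicator {min a b..max a b} x \<partial>lborel)"
    using AE_lborel_singleton[of a] AE_lborel_singleton[of b]
    by (intro nn_integral_cong_AE) (auto simp: indicator_def)
  also have "\<dots> = ennreal ((a - b)\<^sup>2)"
  proof (cases "a \<le> b")
    case True
    have "(\<integral>\<^sup>+x. ennreal (2 * \<bar>x - b\<bar>) * indicator {a..b} x \<partial>lborel)
        = (\<lambda>x. - (b - x)\<^sup>2) b - (\<lambda>x. - (b - x)\<^sup>2) a"
      using True by (intro nn_integral_FTC_Icc) (auto intro!: derivative_eq_intros simp: abs_if)
    then show ?thesis
      using True by (simp add: power2_commute)
  next
    case False
    have "(\<integral>\<^sup>+x. ennreal (2 * \<bar>x - b\<bar>) * indicator {b..a} x \<partial>lborel)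
        = (\<lambda>x. (x - b)\<^sup>2) a - (\<lambda>x. (x - b)\<^sup>2) b"
      using False by (intro nn_integral_FTC_Icc) (auto intro!: derivative_eq_intros simp: abs_if)
    then show ?thesis
      using False by simp
  qed
  finally show ?thesis .
qed

lemma quantile_gap_le_cdf_gap:
  assumes P: "real_distribution P" and Q: "real_distribution Q" and c: "c > 0"
    and P_below: "\<And>x. x < 0 \<Longrightarrow> cdf P x = 0" and P_one: "cdf P 1 = 1"
    and Q_below: "\<And>x. x < 0 \<Longrightarrow> cdf Q x = 0" and Q_one: "cdf Q 1 = 1"
    and growth: "\<And>x y. 0 \<le> x \<Longrightarrow> x \<le> y \<Longrightarrow> y \<le> 1 \<Longrightarrow> c * (y - x) \<le> cdf Q y - cdf Q x"
    and t: "t \<in> {0<..<1}"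
    and x: "min (quantile P t) (quantile Q t) < x" "x < max (quantile P t) (quantile Q t)"
  shows "x \<in> {0..1}" and "c * \<bar>x - quantile Q t\<bar> \<le> \<bar>cdf P x - cdf Q x\<bar>"
proof -
  have q: "quantile P t \<in> {0..1}" "quantile Q t \<in> {0..1}"
    using quantile_in_unit_interval P Q t P_below P_one Q_below Q_one by auto
  then show x01: "x \<in> {0..1}"
    using x by auto
  have "c * \<bar>x - quantile Q t\<bar> \<le> \<bar>t - cdf Q x\<bar>"
    using abs_sub_quantile_le_level_gap[OF Q c growth t x01 q(2)] .
  also have "\<dots> \<le> \<bar>cdf P x - cdf Q x\<bar>"
    using level_between_cdfs[OF P Q t x] by auto
  finally show "c * \<bar>x - quantile Q t\<bar> \<le> \<bar>cdf P x - cdf Q x\<bar>" .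
qed

lemma quantile_L2_le_cdf_L2:
  assumes P: "real_distribution P" and Q: "real_distribution Q" and c: "c > 0"
    and P_below: "\<And>x. x < 0 \<Longrightarrow> cdf P x = 0" and P_one: "cdf P 1 = 1"
    and Q_below: "\<And>x. x < 0 \<Longrightarrow> cdf Q x = 0" and Q_one: "cdf Q 1 = 1"
    and growth: "\<And>x y. 0 \<le> x \<Longrightarrow> x \<le> y \<Longrightarrow> y \<le> 1 \<Longrightarrow> c * (y - x) \<le> cdf Q y - cdf Q x"
  shows "(\<integral>\<^sup>+t. ennreal ((quantile P t - quantile Q t)\<^sup>2) * indicator {0<..<1} t \<partial>lborel)
    \<le> (\<integral>\<^sup>+x. ennreal (2 / c * (cdf P x - cdf Q x)\<^sup>2) * indicator {0..1} x \<partial>lborel)"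
proof -
  note [measurable] = borel_measurable_quantile[OF P] borel_measurable_quantile[OF Q]
  txt \<open>Integrating H over x gives the squared quantile gap at t; for fixed x, H vanishes unless the
    level t lies between cdf P x and cdf Q x.\<close>
  define H where "H t x = (if t \<in> {0<..<1} \<and> min (quantile P t) (quantile Q t) < x
    \<and> x < max (quantile P t) (quantile Q t) then ennreal (2 * \<bar>x - quantile Q t\<bar>) else 0)" for t x
  have H_measurable: "case_prod H \<in> borel_measurable (lborel \<Otimes>\<^sub>M lborel)"
    unfolding H_def by measurable
  have integral_H_x: "(\<integral>\<^sup>+x. H t x \<partial>lborel)
      = ennreal ((quantile P t - quantile Q t)\<^sup>2) * indicator {0<..<1} t" for t
  proof -
    have "H t x = ennreal (2 * \<bar>x - quantile Q t\<bar>)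
        * indicator {min (quantile P t) (quantile Q t)<..<max (quantile P t) (quantile Q t)} x
        * indicator {0<..<1} t" for x
      by (auto simp: H_def indicator_def)
    then show ?thesis
      by (simp add: nn_integral_multc nn_integral_abs_between)
  qed
  have H_le: "H t x \<le> ennreal (2 / c * \<bar>cdf P x - cdf Q x\<bar>) * indicator {0..1} x
      * indicator {min (cdf P x) (cdf Q x)<..max (cdf P x) (cdf Q x)} t" for t x
  proof (cases "t \<in> {0<..<1} \<and> min (quantile P t) (quantile Q t) < x
      \<and> x < max (quantile P t) (quantile Q t)")
    case True
    then have t: "t \<in> {0<..<1}" and x: "min (quantile P t) (quantile Q t) < x"
      "x < max (quantile P t) (quantile Q t)" by auto
    note gap = quantile_gap_le_cdf_gap[OF P Q c P_below P_one Q_below Q_one growth t x]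
    have "2 * \<bar>x - quantile Q t\<bar> \<le> 2 / c * \<bar>cdf P x - cdf Q x\<bar>"
      using gap(2) c by (simp add: field_simps)
    then show ?thesis
      using True gap(1) level_between_cdfs[OF P Q t x] by (simp add: H_def ennreal_leI)
  qed (auto simp: H_def)
  have integral_bound_t: "(\<integral>\<^sup>+t. ennreal (2 / c * \<bar>cdf P x - cdf Q x\<bar>) * indicator {0..1} x
      * indicator {min (cdf P x) (cdf Q x)<..max (cdf P x) (cdf Q x)} t \<partial>lborel)
      = ennreal (2 / c * (cdf P x - cdf Q x)\<^sup>2) * indicator {0..1} x" for x
  proof -
    have length: "emeasure lborel {min (cdf P x) (cdf Q x)<..max (cdf P x) (cdf Q x)}
        = ennreal \<bar>cdf P x - cdf Q x\<bar>"
      by (simp add: min_def max_def abs_if)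
    have "(\<integral>\<^sup>+t. ennreal (2 / c * \<bar>cdf P x - cdf Q x\<bar>) * indicator {0..1} x
        * indicator {min (cdf P x) (cdf Q x)<..max (cdf P x) (cdf Q x)} t \<partial>lborel)
        = ennreal (2 / c * \<bar>cdf P x - cdf Q x\<bar>) * indicator {0..1} x * ennreal \<bar>cdf P x - cdf Q x\<bar>"
      by (subst nn_integral_cmult_indicator) (simp_all add: length)
    also have "\<dots> = ennreal (2 / c * \<bar>cdf P x - cdf Q x\<bar> * \<bar>cdf P x - cdf Q x\<bar>) * indicator {0..1} x"
      using c by (simp add: ennreal_mult[symmetric] mult_ac del: ennreal_mult')
    finally show ?thesis
      by (simp add: power2_eq_square abs_mult_self_eq mult.assoc)
  qed
  have "(\<integral>\<^sup>+t. ennreal ((quantile P t - quantile Q t)\<^sup>2) * indicator {0<..<1} t \<partial>lborel)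
      = (\<integral>\<^sup>+t. (\<integral>\<^sup>+x. H t x \<partial>lborel) \<partial>lborel)"
    by (simp add: integral_H_x)
  also have "\<dots> = (\<integral>\<^sup>+x. (\<integral>\<^sup>+t. H t x \<partial>lborel) \<partial>lborel)"
    by (rule lborel_pair.Fubini'[symmetric, OF H_measurable])
  also have "\<dots> \<le> (\<integral>\<^sup>+x. ennreal (2 / c * (cdf P x - cdf Q x)\<^sup>2) * indicator {0..1} x \<partial>lborel)"
    unfolding integral_bound_t[symmetric] by (intro nn_integral_mono H_le)
  finally show ?thesis .
qed

section \<open>Empirical measures\<close>

lemma real_distribution_empirical_measure:
  "N \<ge> 1 \<Longrightarrow> real_distribution (empirical_measure N xs)"
  unfolding empirical_measure_def
  by (intro prob_space.real_distribution_distr prob_space_measure_pmf) auto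

lemma cdf_empirical_measure:
  assumes "N \<ge> 1"
  shows "cdf (empirical_measure N xs) x = (\<Sum>n\<in>{1..N}. indicator {..x} (xs n)) / real N"
proof -
  have "cdf (empirical_measure N xs) x = measure (pmf_of_set {1..N}) (xs -` {..x})"
    unfolding cdf_def empirical_measure_def by (simp add: measure_distr)
  also have "\<dots> = (\<integral>n. indicator (xs -` {..x}) n \<partial>pmf_of_set {1..N})"
    by simp
  also have "\<dots> = (\<Sum>n\<in>{1..N}. indicator (xs -` {..x}) n) / card {1..N}"
    using assms by (intro integral_pmf_of_set) auto
  finally show ?thesis
    by (simp add: indicator_vimage)
qed

lemma borel_measurable_cdf: "real_distribution \<mu> \<Longrightarrow> cdf \<mu> \<in> borel_measurable borel"
  by (rule cdf_distribution.measurable_C[OF cdf_distribution.intro])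

lemma cdf_distr_eq:
  assumes "X \<in> borel_measurable M"
  shows "cdf (distr M borel X) x = measure M {\<omega>\<in>space M. X \<omega> \<le> x}"
  using assms by (simp add: cdf_def measure_distr vimage_def Int_def conj_commute)

lemma cdf_distr_unit_interval:
  assumes "prob_space M" and "X \<in> borel_measurable M" and "\<And>\<omega>. \<omega> \<in> space M \<Longrightarrow> X \<omega> \<in> {0..<1}"
  shows "x < 0 \<Longrightarrow> cdf (distr M borel X) x = 0" and "cdf (distr M borel X) 1 = 1"
proof -
  interpret prob_space M by (rule assms(1))
  show "cdf (distr M borel X) x = 0" if "x < 0"
  proof -
    have "cdf (distr M borel X) x = measure M {\<omega>\<in>space M. X \<omega> \<le> x}"
      by (rule cdf_distr_eq[OF assms(2)])
    also have "{\<omega>\<in>space M. X \<omega> \<le> x} = {}"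
      using assms(3) that by force
    finally show ?thesis
      by simp
  qed
  have "{\<omega>\<in>space M. X \<omega> \<le> 1} = space M"
    using assms(3) by force
  then show "cdf (distr M borel X) 1 = 1"
    by (simp add: cdf_distr_eq[OF assms(2)] prob_space)
qed

lemma cdf_increment_ge:
  assumes \<mu>: "real_distribution \<mu>"
    and lower_density: "\<And>A. A \<in> sets borel \<Longrightarrow> A \<subseteq> {0..<1} \<Longrightarrow> c * measure lborel A \<le> measure \<mu> A"
    and xy: "0 \<le> x" "x \<le> y" "y \<le> 1"
  shows "c * (y - x) \<le> cdf \<mu> y - cdf \<mu> x"
proof (cases "x = y")
  case False
  interpret real_distribution \<mu> by (rule \<mu>)
  have "x < y" using xy False by simp
  then have "c * (y - x) = c * measure lborel {x<..<y}" by simp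
  also have "\<dots> \<le> measure \<mu> {x<..<y}" using xy by (intro lower_density) auto
  also have "\<dots> \<le> measure \<mu> {x<..y}" by (intro finite_measure_mono) auto
  also have "\<dots> = cdf \<mu> y - cdf \<mu> x" using cdf_diff_eq[OF \<open>x < y\<close>] by simp
  finally show ?thesis .
qed simp

lemma W2_sq_empirical_measure_le:
  assumes N: "N \<ge> 1" and xs: "\<And>n. n \<in> {1..N} \<Longrightarrow> xs n \<in> {0..<1}"
    and \<mu>: "real_distribution \<mu>" and c: "c > 0"
    and \<mu>_below: "\<And>x. x < 0 \<Longrightarrow> cdf \<mu> x = 0" and \<mu>_one: "cdf \<mu> 1 = 1"
    and growth: "\<And>x y. 0 \<le> x \<Longrightarrow> x \<le> y \<Longrightarrow> y \<le> 1 \<Longrightarrow> c * (y - x) \<le> cdf \<mu> y - cdf \<mu> x"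
  shows "ennreal ((W2 (empirical_measure N xs) \<mu>)\<^sup>2) \<le> ennreal (2 / (c * (real N)\<^sup>2))
    * (\<integral>\<^sup>+x. ennreal ((\<Sum>n\<in>{1..N}. indicator {..x} (xs n) - cdf \<mu> x)\<^sup>2) * indicator {0..1} x \<partial>lborel)"
proof -
  define P where "P = empirical_measure N xs"
  have P: "real_distribution P"
    unfolding P_def using N by (rule real_distribution_empirical_measure)
  have cdf_P: "cdf P x = (\<Sum>n\<in>{1..N}. indicator {..x} (xs n)) / real N" for x
    unfolding P_def using N by (rule cdf_empirical_measure)
  have P_below: "cdf P x = 0" if "x < 0" for x
    unfolding cdf_P using xs that by (force intro!: sum.neutral)
  have P_one: "cdf P 1 = 1"
    unfolding cdf_P using xs N by (auto simp: less_imp_le)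
  have cdf_gap: "ennreal (2 / c * (cdf P x - cdf \<mu> x)\<^sup>2) = ennreal (2 / (c * (real N)\<^sup>2))
      * ennreal ((\<Sum>n\<in>{1..N}. indicator {..x} (xs n) - cdf \<mu> x)\<^sup>2)" for x
    using N c by (simp add: cdf_P sum_subtractf power_divide ennreal_mult[symmetric] field_simps
        del: ennreal_mult')
  have "ennreal ((W2 P \<mu>)\<^sup>2)
      \<le> (\<integral>\<^sup>+t. ennreal ((quantile P t - quantile \<mu> t)\<^sup>2) * indicator {0<..<1} t \<partial>lborel)"
    by (rule W2_sq_le_quantile_distance[OF P \<mu>])
  also have "\<dots> \<le> (\<integral>\<^sup>+x. ennreal (2 / c * (cdf P x - cdf \<mu> x)\<^sup>2) * indicator {0..1} x \<partial>lborel)"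
    by (rule quantile_L2_le_cdf_L2[OF P \<mu> c P_below P_one \<mu>_below \<mu>_one growth])
  also have "\<dots> = (\<integral>\<^sup>+x. ennreal (2 / (c * (real N)\<^sup>2))
      * (ennreal ((\<Sum>n\<in>{1..N}. indicator {..x} (xs n) - cdf \<mu> x)\<^sup>2) * indicator {0..1} x) \<partial>lborel)"
    by (simp only: cdf_gap mult.assoc)
  also have "\<dots> = ennreal (2 / (c * (real N)\<^sup>2))
      * (\<integral>\<^sup>+x. ennreal ((\<Sum>n\<in>{1..N}. indicator {..x} (xs n) - cdf \<mu> x)\<^sup>2) * indicator {0..1} x \<partial>lborel)"
  proof (rule nn_integral_cmult)
    note [measurable] = borel_measurable_cdf[OF \<mu>]
    show "(\<lambda>x. ennreal ((\<Sum>n\<in>{1..N}. indicator {..x} (xs n) - cdf \<mu> x)\<^sup>2) * indicator {0..1} x)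
      \<in> borel_measurable lborel"
      unfolding measurable_lborel1 indicator_def atMost_iff by measurable
  qed
  finally show ?thesis
    unfolding P_def .
qed

section \<open>Second moments under strong mixing\<close>

lemma abs_dependence_le_alpha_mix:
  assumes "prob_space M" and "A \<in> sets borel" "B \<in> sets borel"
  shows "\<bar>measure M {\<omega>\<in>space M. X \<omega> \<in> A \<and> Y \<omega> \<in> B}
    - measure M {\<omega>\<in>space M. X \<omega> \<in> A} * measure M {\<omega>\<in>space M. Y \<omega> \<in> B}\<bar> \<le> alpha_mix M X Y"
proof -
  interpret prob_space M by (rule assms(1))
  define g where "g A B = \<bar>measure M {\<omega>\<in>space M. X \<omega> \<in> A \<and> Y \<omega> \<in> B}
    - measure M {\<omega>\<in>space M. X \<omega> \<in> A} * measure M {\<omega>\<in>space M. Y \<omega> \<in> B}\<bar>" for A B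
  have g_le_1: "g A B \<le> 1" for A B
  proof -
    have "measure M {\<omega>\<in>space M. X \<omega> \<in> A} * measure M {\<omega>\<in>space M. Y \<omega> \<in> B} \<le> 1"
      by (intro mult_le_one) auto
    then show ?thesis
      unfolding g_def using measure_nonneg[of M] prob_le_1 by (smt (verit) zero_le_mult_iff)
  qed
  have "(SUP B\<in>sets borel. g A B) \<le> 1" for A
    by (intro cSUP_least g_le_1) auto
  then have "g A B \<le> (SUP A\<in>sets borel. SUP B\<in>sets borel. g A B)"
    using assms(2,3) g_le_1
    by (intro cSUP_upper2[where x = A] cSUP_upper2[where x = B] bdd_aboveI2) auto
  then show ?thesis
    unfolding alpha_mix_def g_def .
qed

lemma integral_centered_indicators:
  assumes "prob_space M" and [measurable]: "X \<in> borel_measurable M" "Y \<in> borel_measurable M"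
    and [measurable]: "A \<in> sets borel" "B \<in> sets borel"
  defines "p \<equiv> measure M {\<omega>\<in>space M. X \<omega> \<in> A}" and "q \<equiv> measure M {\<omega>\<in>space M. Y \<omega> \<in> B}"
  shows "(\<integral>\<omega>. (indicator A (X \<omega>) - p) * (indicator B (Y \<omega>) - q) \<partial>M)
    = measure M {\<omega>\<in>space M. X \<omega> \<in> A \<and> Y \<omega> \<in> B} - p * q"
proof -
  interpret prob_space M by (rule assms(1))
  define E where "E = {\<omega>\<in>space M. X \<omega> \<in> A \<and> Y \<omega> \<in> B}"
  define EA where "EA = {\<omega>\<in>space M. X \<omega> \<in> A}"
  define EB where "EB = {\<omega>\<in>space M. Y \<omega> \<in> B}"
  have [measurable]: "E \<in> sets M" "EA \<in> sets M" "EB \<in> sets M"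
    unfolding E_def EA_def EB_def by measurable
  have "(\<integral>\<omega>. (indicator A (X \<omega>) - p) * (indicator B (Y \<omega>) - q) \<partial>M)
      = (\<integral>\<omega>. indicator E \<omega> - q * indicator EA \<omega> - p * indicator EB \<omega> + p * q \<partial>M)"
    by (intro Bochner_Integration.integral_cong) (auto simp: E_def EA_def EB_def indicator_def algebra_simps)
  also have "\<dots> = measure M E - q * measure M EA - p * measure M EB + p * q"
    by (simp add: prob_space less_top[symmetric])
  finally show ?thesis
    by (simp add: E_def EA_def EB_def p_def q_def)
qed

lemma power2_sum_atLeastAtMost:
  fixes z :: "nat \<Rightarrow> 'a::comm_semiring_1"
  shows "(\<Sum>n\<in>{1..N}. z n)\<^sup>2 = (\<Sum>n\<in>{1..N}. (z n)\<^sup>2) + 2 * (\<Sum>m\<in>{1..N}. \<Sum>n\<in>{m<..N}. z m * z n)"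
proof (induction N)
  case (Suc N)
  have "{m<..Suc N} = insert (Suc N) {m<..N}" if "m \<le> N" for m
    using that by auto
  then have "(\<Sum>m\<in>{1..Suc N}. \<Sum>n\<in>{m<..Suc N}. z m * z n)
      = (\<Sum>m\<in>{1..N}. z m * z (Suc N) + (\<Sum>n\<in>{m<..N}. z m * z n))"
    by (simp add: atLeastAtMostSuc_conv)
  also have "\<dots> = (\<Sum>m\<in>{1..N}. z m) * z (Suc N) + (\<Sum>m\<in>{1..N}. \<Sum>n\<in>{m<..N}. z m * z n)"
    by (simp add: sum.distrib sum_distrib_right)
  finally show ?case
    using Suc.IH by (simp add: atLeastAtMostSuc_conv power2_eq_square mult_2 algebra_simps)
qed simp

lemma integral_power2_sum:
  fixes Z :: "nat \<Rightarrow> 'a \<Rightarrow> real"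
  assumes Z: "\<And>m n. m \<in> {1..N} \<Longrightarrow> n \<in> {1..N} \<Longrightarrow> integrable M (\<lambda>\<omega>. Z m \<omega> * Z n \<omega>)"
  shows "integrable M (\<lambda>\<omega>. (\<Sum>n\<in>{1..N}. Z n \<omega>)\<^sup>2)"
    and "(\<integral>\<omega>. (\<Sum>n\<in>{1..N}. Z n \<omega>)\<^sup>2 \<partial>M) = (\<Sum>n\<in>{1..N}. \<integral>\<omega>. Z n \<omega> * Z n \<omega> \<partial>M)
      + 2 * (\<Sum>m\<in>{1..N}. \<Sum>n\<in>{m<..N}. \<integral>\<omega>. Z m \<omega> * Z n \<omega> \<partial>M)"
proof -
  show "integrable M (\<lambda>\<omega>. (\<Sum>n\<in>{1..N}. Z n \<omega>)\<^sup>2)"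
    unfolding power2_eq_square sum_product by (intro Bochner_Integration.integrable_sum Z)
  have diagonal: "integrable M (\<lambda>\<omega>. \<Sum>n\<in>{1..N}. Z n \<omega> * Z n \<omega>)"
    by (intro Bochner_Integration.integrable_sum Z)
  have off_diagonal: "integrable M (\<lambda>\<omega>. \<Sum>n\<in>{m<..N}. Z m \<omega> * Z n \<omega>)" if "m \<in> {1..N}" for m
    using that by (intro Bochner_Integration.integrable_sum Z) auto
  have off_diagonal_sum: "integrable M (\<lambda>\<omega>. \<Sum>m\<in>{1..N}. \<Sum>n\<in>{m<..N}. Z m \<omega> * Z n \<omega>)"
    by (intro Bochner_Integration.integrable_sum off_diagonal)
  have diagonal_integral: "(\<integral>\<omega>. (\<Sum>n\<in>{1..N}. Z n \<omega> * Z n \<omega>) \<partial>M)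
      = (\<Sum>n\<in>{1..N}. \<integral>\<omega>. Z n \<omega> * Z n \<omega> \<partial>M)"
    by (intro Bochner_Integration.integral_sum Z)
  have "(\<integral>\<omega>. (\<Sum>m\<in>{1..N}. \<Sum>n\<in>{m<..N}. Z m \<omega> * Z n \<omega>) \<partial>M)
      = (\<Sum>m\<in>{1..N}. \<integral>\<omega>. (\<Sum>n\<in>{m<..N}. Z m \<omega> * Z n \<omega>) \<partial>M)"
    by (intro Bochner_Integration.integral_sum off_diagonal)
  also have "\<dots> = (\<Sum>m\<in>{1..N}. \<Sum>n\<in>{m<..N}. \<integral>\<omega>. Z m \<omega> * Z n \<omega> \<partial>M)"
    by (intro sum.cong refl Bochner_Integration.integral_sum Z) auto
  finally have off_diagonal_integral: "(\<integral>\<omega>. (\<Sum>m\<in>{1..N}. \<Sum>n\<in>{m<..N}. Z m \<omega> * Z n \<omega>) \<partial>M)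
      = (\<Sum>m\<in>{1..N}. \<Sum>n\<in>{m<..N}. \<integral>\<omega>. Z m \<omega> * Z n \<omega> \<partial>M)" .
  have "(\<integral>\<omega>. (\<Sum>n\<in>{1..N}. Z n \<omega>)\<^sup>2 \<partial>M)
      = (\<integral>\<omega>. (\<Sum>n\<in>{1..N}. Z n \<omega> * Z n \<omega>) + 2 * (\<Sum>m\<in>{1..N}. \<Sum>n\<in>{m<..N}. Z m \<omega> * Z n \<omega>) \<partial>M)"
    unfolding power2_sum_atLeastAtMost by (simp only: power2_eq_square)
  also have "\<dots> = (\<integral>\<omega>. (\<Sum>n\<in>{1..N}. Z n \<omega> * Z n \<omega>) \<partial>M)
      + 2 * (\<integral>\<omega>. (\<Sum>m\<in>{1..N}. \<Sum>n\<in>{m<..N}. Z m \<omega> * Z n \<omega>) \<partial>M)"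
    using diagonal off_diagonal_sum by simp
  finally show "(\<integral>\<omega>. (\<Sum>n\<in>{1..N}. Z n \<omega>)\<^sup>2 \<partial>M) = (\<Sum>n\<in>{1..N}. \<integral>\<omega>. Z n \<omega> * Z n \<omega> \<partial>M)
      + 2 * (\<Sum>m\<in>{1..N}. \<Sum>n\<in>{m<..N}. \<integral>\<omega>. Z m \<omega> * Z n \<omega> \<partial>M)"
    by (simp only: diagonal_integral off_diagonal_integral)
qed

lemma second_moment_indicator_sum_le:
  assumes M: "prob_space M"
    and X: "\<And>n. n \<in> {1..N} \<Longrightarrow> X n \<in> borel_measurable M" and A: "A \<in> sets borel"
    and p: "\<And>n. n \<in> {1..N} \<Longrightarrow> measure M {\<omega>\<in>space M. X n \<omega> \<in> A} = p"
  shows "(\<integral>\<^sup>+\<omega>. ennreal ((\<Sum>n\<in>{1..N}. indicator A (X n \<omega>) - p)\<^sup>2) \<partial>M)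
    \<le> ennreal (real N / 4 + 2 * (\<Sum>m\<in>{1..N}. \<Sum>n\<in>{m<..N}. alpha_mix M (X m) (X n)))"
proof -
  interpret prob_space M by (rule M)
  define Z where "Z n \<omega> = indicator A (X n \<omega>) - p" for n \<omega>
  have Z_measurable: "Z n \<in> borel_measurable M" if "n \<in> {1..N}" for n
    unfolding Z_def using X[OF that] A by measurable
  have Z_bounded: "\<bar>Z n \<omega>\<bar> \<le> 1" if "n \<in> {1..N}" for n \<omega>
    using p[OF that, symmetric] prob_le_1 measure_nonneg[of M] by (auto simp: Z_def indicator_def)
  have Z_product_integrable: "integrable M (\<lambda>\<omega>. Z m \<omega> * Z n \<omega>)" if "m \<in> {1..N}" "n \<in> {1..N}" for m n
    using Z_measurable[OF that(1)] Z_measurable[OF that(2)] Z_bounded[OF that(1)] Z_bounded[OF that(2)]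
    by (intro integrable_const_bound[where B = 1]) (auto simp: abs_mult intro!: mult_le_one)
  have Z_product: "(\<integral>\<omega>. Z m \<omega> * Z n \<omega> \<partial>M) = measure M {\<omega>\<in>space M. X m \<omega> \<in> A \<and> X n \<omega> \<in> A} - p * p"
    if "m \<in> {1..N}" "n \<in> {1..N}" for m n
    using integral_centered_indicators[OF M X[OF that(1)] X[OF that(2)] A A] p[OF that(1)] p[OF that(2)]
    by (simp add: Z_def)
  have diagonal: "(\<integral>\<omega>. Z n \<omega> * Z n \<omega> \<partial>M) \<le> 1 / 4" if "n \<in> {1..N}" for n
  proof -
    have "(\<integral>\<omega>. Z n \<omega> * Z n \<omega> \<partial>M) = p - p * p"
      using Z_product[OF that that] p[OF that] by simp
    also have "\<dots> \<le> 1 / 4"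
      using zero_le_power2[of "p - 1 / 2"] by (simp add: power2_eq_square algebra_simps)
    finally show ?thesis .
  qed
  have off_diagonal: "(\<integral>\<omega>. Z m \<omega> * Z n \<omega> \<partial>M) \<le> alpha_mix M (X m) (X n)"
    if "m \<in> {1..N}" "n \<in> {1..N}" for m n
    using Z_product[OF that] abs_dependence_le_alpha_mix[OF M A A, of "X m" "X n"] p[OF that(1)] p[OF that(2)]
    by simp
  note square_sum = integral_power2_sum[of N M Z, OF Z_product_integrable]
  have "(\<integral>\<omega>. (\<Sum>n\<in>{1..N}. Z n \<omega>)\<^sup>2 \<partial>M)
      = (\<Sum>n\<in>{1..N}. \<integral>\<omega>. Z n \<omega> * Z n \<omega> \<partial>M)
        + 2 * (\<Sum>m\<in>{1..N}. \<Sum>n\<in>{m<..N}. \<integral>\<omega>. Z m \<omega> * Z n \<omega> \<partial>M)"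
    by (rule square_sum(2))
  also have "\<dots> \<le> (\<Sum>n\<in>{1..N}. 1 / 4) + 2 * (\<Sum>m\<in>{1..N}. \<Sum>n\<in>{m<..N}. alpha_mix M (X m) (X n))"
    by (intro add_mono mult_left_mono sum_mono diagonal off_diagonal) auto
  finally have "(\<integral>\<omega>. (\<Sum>n\<in>{1..N}. Z n \<omega>)\<^sup>2 \<partial>M)
      \<le> real N / 4 + 2 * (\<Sum>m\<in>{1..N}. \<Sum>n\<in>{m<..N}. alpha_mix M (X m) (X n))"
    by simp
  then show ?thesis
    using square_sum(1) by (simp add: nn_integral_eq_integral Z_def ennreal_leI)
qed

lemma nn_integral_empirical_deviation_le:
  assumes M: "prob_space M" and X: "\<And>n. n \<in> {1..N} \<Longrightarrow> X n \<in> borel_measurable M"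
    and F: "F \<in> borel_measurable borel"
    and cdf_X: "\<And>n x. n \<in> {1..N} \<Longrightarrow> measure M {\<omega>\<in>space M. X n \<omega> \<in> {..x}} = F x"
  shows "(\<integral>\<^sup>+\<omega>. \<integral>\<^sup>+x. ennreal ((\<Sum>n\<in>{1..N}. indicator {..x} (X n \<omega>) - F x)\<^sup>2) * indicator {0..1} x \<partial>lborel \<partial>M)
    \<le> ennreal (real N / 4 + 2 * (\<Sum>m\<in>{1..N}. \<Sum>n\<in>{m<..N}. alpha_mix M (X m) (X n)))"
    (is "_ \<le> ennreal ?V")
proof -
  interpret pair_sigma_finite M "lborel :: real measure"
    using M by (simp add: pair_sigma_finite_def prob_space_imp_sigma_finite lborel.sigma_finite_measure_axioms)
  note [measurable] = X F
  define D where "D \<omega> x = ennreal ((\<Sum>n\<in>{1..N}. indicator {..x} (X n \<omega>) - F x)\<^sup>2)" for \<omega> x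
  have D_measurable: "(\<lambda>\<omega>. D \<omega> x) \<in> borel_measurable M" for x
    unfolding D_def indicator_def atMost_iff by measurable
  have "(\<lambda>(\<omega>, x). D \<omega> x * indicator {0..1} x) \<in> borel_measurable (M \<Otimes>\<^sub>M lborel)"
    unfolding D_def indicator_def atMost_iff by measurable
  then have "(\<integral>\<^sup>+\<omega>. \<integral>\<^sup>+x. D \<omega> x * indicator {0..1} x \<partial>lborel \<partial>M)
      = (\<integral>\<^sup>+x. \<integral>\<^sup>+\<omega>. D \<omega> x * indicator {0..1} x \<partial>M \<partial>lborel)"
    by (rule Fubini'[symmetric])
  also have "\<dots> = (\<integral>\<^sup>+x. (\<integral>\<^sup>+\<omega>. D \<omega> x \<partial>M) * indicator {0..1} x \<partial>lborel)"
    using D_measurable by (simp add: nn_integral_multc)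
  also have "\<dots> \<le> (\<integral>\<^sup>+x. ennreal ?V * indicator {0..1::real} x \<partial>lborel)"
    unfolding D_def using second_moment_indicator_sum_le[OF M X _ cdf_X]
    by (intro nn_integral_mono mult_right_mono) auto
  also have "\<dots> = ennreal ?V"
    by (simp add: nn_integral_cmult_indicator)
  finally show ?thesis
    unfolding D_def .
qed

theorem theorem3:
  fixes M :: "'a measure" and X :: "nat \<Rightarrow> 'a \<Rightarrow> real" and \<mu> :: "real measure"
    and N :: nat and c B :: real
  assumes "prob_space M"
    and "N \<ge> 1"
    and "\<And>n. n \<in> {1..N} \<Longrightarrow> X n \<in> borel_measurable M"
    and "\<And>n \<omega>. n \<in> {1..N} \<Longrightarrow> \<omega> \<in> space M \<Longrightarrow> X n \<omega> \<in> {0..<1}"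
    and "\<And>n. n \<in> {1..N} \<Longrightarrow> distr M borel (X n) = \<mu>"
    and "c > 0" and "B \<ge> 0"
    and "\<And>A. A \<in> sets borel \<Longrightarrow> A \<subseteq> {0..<1} \<Longrightarrow> c * measure lborel A \<le> measure \<mu> A"
    and "(\<Sum>m\<in>{1..N}. \<Sum>n\<in>{m<..N}. alpha_mix M (X m) (X n)) \<le> B * real N"
  shows "(\<integral>\<^sup>+ \<omega>. ennreal ((W2 (empirical_measure N (\<lambda>n. X n \<omega>)) \<mu>)\<^sup>2) \<partial>M)
           \<le> ennreal ((2 + 16 * B) / (3 * c * real N))"
proof -
  note M = assms(1) and N = assms(2) and X = assms(3) and range = assms(4) and distr_X = assms(5)
    and c = assms(6) and B = assms(7) and lower_density = assms(8) and mixing = assms(9)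
  have first: "1 \<in> {1..N}"
    using N by simp
  have \<mu>: "real_distribution \<mu>" "\<And>x. x < 0 \<Longrightarrow> cdf \<mu> x = 0" "cdf \<mu> 1 = 1"
    using prob_space.real_distribution_distr[OF M X[OF first]] distr_X[OF first]
      cdf_distr_unit_interval[OF M X[OF first] range[OF first]] by auto
  have cdf_X: "measure M {\<omega>\<in>space M. X n \<omega> \<in> {..x}} = cdf \<mu> x" if "n \<in> {1..N}" for n x
    using cdf_distr_eq[OF X[OF that]] distr_X[OF that] by simp
  note cdf_measurable[measurable] = borel_measurable_cdf[OF \<mu>(1)] and [measurable] = X
  define D where "D \<omega> = (\<integral>\<^sup>+x. ennreal ((\<Sum>n\<in>{1..N}. indicator {..x} (X n \<omega>) - cdf \<mu> x)\<^sup>2)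
    * indicator {0..1} x \<partial>lborel)" for \<omega>
  have "(\<integral>\<^sup>+\<omega>. D \<omega> \<partial>M)
      \<le> ennreal (real N / 4 + 2 * (\<Sum>m\<in>{1..N}. \<Sum>n\<in>{m<..N}. alpha_mix M (X m) (X n)))"
    unfolding D_def by (rule nn_integral_empirical_deviation_le[OF M X cdf_measurable cdf_X])
  also have "\<dots> \<le> ennreal (real N / 4 + 2 * (B * real N))"
    using mixing by (intro ennreal_leI) simp
  finally have D_bound: "(\<integral>\<^sup>+\<omega>. D \<omega> \<partial>M) \<le> ennreal (real N / 4 + 2 * (B * real N))" .
  have "(\<integral>\<^sup>+ \<omega>. ennreal ((W2 (empirical_measure N (\<lambda>n. X n \<omega>)) \<mu>)\<^sup>2) \<partial>M)
      \<le> (\<integral>\<^sup>+\<omega>. ennreal (2 / (c * (real N)\<^sup>2)) * D \<omega> \<partial>M)"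
    unfolding D_def using cdf_increment_ge[OF \<mu>(1) lower_density]
    by (intro nn_integral_mono W2_sq_empirical_measure_le[OF N _ \<mu>(1) c \<mu>(2,3)] range)
  also have "\<dots> = ennreal (2 / (c * (real N)\<^sup>2)) * (\<integral>\<^sup>+\<omega>. D \<omega> \<partial>M)"
    by (rule nn_integral_cmult) (simp add: D_def indicator_def measurable_lborel1)
  also have "\<dots> \<le> ennreal (2 / (c * (real N)\<^sup>2)) * ennreal (real N / 4 + 2 * (B * real N))"
    by (intro mult_left_mono D_bound) simp
  also have "\<dots> = ennreal ((1 + 8 * B) / (2 * c * real N))"
    using N c B by (simp add: ennreal_mult[symmetric] field_simps power2_eq_square del: ennreal_mult')
  also have "\<dots> \<le> ennreal ((2 + 16 * B) / (3 * c * real N))"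
    using N c B by (intro ennreal_leI) (simp add: field_simps)
  finally show ?thesis .
qed

end
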